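(* Let $A\to B$ be a map of $\mathbb{Z}$-graded unital rings, where $A$ is concentrated in grade $0$. Suppose $A\to B$ is separable, i.e. the multiplication map $\mu:B\otimes_A B^{op}\to B$, viewed as a map of $B$-bimodules, admits a $B$-bimodule section $\sigma:B\to B\otimes_A B^{op}$. Suppose moreover that $B$ has no zero divisors in the subring $B_0$ (no nonzero element of $B_0$ is a zero divisor in $B$). Then $B$ is concentrated in grade $0$.
   Context: Rings are unital and ring maps unital; gradings are $\mathbb{Z}$-gradings, $B_n$ denotes the degree-$n$ part of $B$. *)

theory Defs
  imports Main "HOL-Library.Poly_Mapping"
begin

definition Z_grading :: "(int \<Rightarrow> 'b::ring_1 set) \<Rightarrow> bool" where
  "Z_grading G \<longleftrightarrow>
     (\<forall>n. 0 \<in> G n \<and> (\<forall>x\<in>G n. \<forall>y\<in>G n. x - y \<in> G n)) \<and>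
     (\<forall>m n. \<forall>x\<in>G m. \<forall>y\<in>G n. x * y \<in> G (m + n)) \<and>
     (\<forall>b. \<exists>!c. finite {n. c n \<noteq> 0} \<and> (\<forall>n. c n \<in> G n) \<and>
                 b = (\<Sum>n\<in>{n. c n \<noteq> 0}. c n))"

definition ring_map :: "('a::ring_1 \<Rightarrow> 'b::ring_1) \<Rightarrow> bool" where
  "ring_map f \<longleftrightarrow> f 1 = 1 \<and> (\<forall>x y. f (x + y) = f x + f y) \<and> (\<forall>x y. f (x * y) = f x * f y)"

text \<open>Formal Z-linear combinations of pairs (x,y), x,y in B; the tensor product
  B \<otimes>_A B^op is the quotient by the subgroup tensor_rel f generated by the
  biadditivity and A-balancing relations (A acting through f).\<close>
type_synonym 'b formal_tensor = "('b \<times> 'b) \<Rightarrow>\<^sub>0 int"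

abbreviation pt :: "'b \<Rightarrow> 'b \<Rightarrow> 'b formal_tensor" where
  "pt x y \<equiv> Poly_Mapping.single (x, y) 1"

inductive_set tensor_rel :: "('a::ring_1 \<Rightarrow> 'b::ring_1) \<Rightarrow> 'b formal_tensor set"
  for f where
  zero: "0 \<in> tensor_rel f"
| addL: "pt (x + x') y - pt x y - pt x' y \<in> tensor_rel f"
| addR: "pt x (y + y') - pt x y - pt x y' \<in> tensor_rel f"
| bal: "pt (x * f a) y - pt x (f a * y) \<in> tensor_rel f"
| diff: "u \<in> tensor_rel f \<Longrightarrow> v \<in> tensor_rel f \<Longrightarrow> u - v \<in> tensor_rel f"

definition tensor_eq :: "('a::ring_1 \<Rightarrow> 'b::ring_1) \<Rightarrow> 'b formal_tensor \<Rightarrow> 'b formal_tensor \<Rightarrow> bool" where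
  "tensor_eq f u v \<longleftrightarrow> u - v \<in> tensor_rel f"

definition tmult :: "'b::ring_1 formal_tensor \<Rightarrow> 'b" where
  "tmult u = (\<Sum>p\<in>Poly_Mapping.keys u. of_int (Poly_Mapping.lookup u p) * (fst p * snd p))"

definition lact :: "'b::ring_1 \<Rightarrow> 'b formal_tensor \<Rightarrow> 'b formal_tensor" where
  "lact c u = (\<Sum>p\<in>Poly_Mapping.keys u. Poly_Mapping.single (c * fst p, snd p) (Poly_Mapping.lookup u p))"

definition ract :: "'b::ring_1 formal_tensor \<Rightarrow> 'b \<Rightarrow> 'b formal_tensor" where
  "ract u c = (\<Sum>p\<in>Poly_Mapping.keys u. Poly_Mapping.single (fst p, snd p * c) (Poly_Mapping.lookup u p))"

text \<open>f : A \<rightarrow> B is separable: mu : B \<otimes>_A B^op \<rightarrow> B admits a B-bimodule section sigma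
  (sigma given on representatives; all identities hold in the quotient).\<close>
definition separable_map :: "('a::ring_1 \<Rightarrow> 'b::ring_1) \<Rightarrow> bool" where
  "separable_map f \<longleftrightarrow> (\<exists>\<sigma> :: 'b \<Rightarrow> 'b formal_tensor.
     (\<forall>b b'. tensor_eq f (\<sigma> (b + b')) (\<sigma> b + \<sigma> b')) \<and>
     (\<forall>b c. tensor_eq f (\<sigma> (c * b)) (lact c (\<sigma> b))) \<and>
     (\<forall>b c. tensor_eq f (\<sigma> (b * c)) (ract (\<sigma> b) c)) \<and>
     (\<forall>b. tmult (\<sigma> b) = b))"

end

theory Submission
  imports Defs "HOL.Modules"
begin

text \<open>Let \<open>e = \<sigma> 1 = \<Sum>\<^sub>i x\<^sub>i \<otimes> y\<^sub>i\<close>. Since \<open>\<sigma>\<close> is a bimodule map, \<open>b e = \<sigma> b = e b\<close> for all \<open>b\<close>.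
  Because \<open>A\<close> sits in degree 0, the bihomogeneous parts \<open>(x, y) \<mapsto> x\<^sub>j y\<^sub>k\<close> are biadditive and
  \<open>A\<close>-balanced, so they descend to the tensor product. Applied to \<open>e\<close> they give elements
  \<open>u\<^sub>j = \<Sum>\<^sub>i (x\<^sub>i)\<^sub>j (y\<^sub>i)\<^sub>-\<^sub>j\<close> of \<open>B\<^sub>0\<close>, almost all zero, with \<open>\<Sum>\<^sub>j u\<^sub>j = \<mu>(e)\<^sub>0 = 1\<close>, and
  comparing the \<open>(j + n, -j)\<close>-parts of \<open>b e = e b\<close> for \<open>b \<in> B\<^sub>n\<close> gives \<open>b u\<^sub>j = u\<^sub>j\<^sub>+\<^sub>n b\<close>.
  For \<open>n \<noteq> 0\<close> pick \<open>j\<close> extremal among the indices with \<open>u\<^sub>j \<noteq> 0\<close>, so that \<open>u\<^sub>j\<^sub>+\<^sub>n = 0\<close>;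
  then \<open>b u\<^sub>j = 0\<close>, and \<open>b = 0\<close> since \<open>u\<^sub>j\<close> is not a zero divisor.\<close>

definition component :: "(int \<Rightarrow> 'b::ring_1 set) \<Rightarrow> int \<Rightarrow> 'b \<Rightarrow> 'b" where
  "component G n b =
     (THE c. finite {n. c n \<noteq> 0} \<and> (\<forall>n. c n \<in> G n) \<and> b = (\<Sum>n | c n \<noteq> 0. c n)) n"

context
  fixes G :: "int \<Rightarrow> 'b::ring_1 set"
  assumes grading: "Z_grading G"
begin

lemma grade_zero: "0 \<in> G n"
  using grading unfolding Z_grading_def by blast

lemma grade_diff: "x \<in> G n \<Longrightarrow> y \<in> G n \<Longrightarrow> x - y \<in> G n"
  using grading unfolding Z_grading_def by blast

lemma grade_mult: "x \<in> G m \<Longrightarrow> y \<in> G n \<Longrightarrow> x * y \<in> G (m + n)"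
  using grading unfolding Z_grading_def by blast

lemma grade_add: "x \<in> G n \<Longrightarrow> y \<in> G n \<Longrightarrow> x + y \<in> G n"
  using grade_diff[of x n "0 - y"] grade_diff[of 0 n y] grade_zero by simp

lemma grade_sum: "(\<And>i. i \<in> I \<Longrightarrow> F i \<in> G n) \<Longrightarrow> sum F I \<in> G n"
  by (induction I rule: infinite_finite_induct) (auto intro: grade_zero grade_add)

lemma grade_of_int_mult: "x \<in> G n \<Longrightarrow> of_int k * x \<in> G n"
  by (induction k rule: int_induct[where k = 0])
    (auto simp: distrib_right left_diff_distrib intro: grade_zero grade_add grade_diff)

lemma component_decomposition:
  "finite {n. component G n b \<noteq> 0} \<and> (\<forall>n. component G n b \<in> G n) \<and>
   b = (\<Sum>n | component G n b \<noteq> 0. component G n b)"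
proof -
  have "\<exists>!c. finite {n. c n \<noteq> 0} \<and> (\<forall>n. c n \<in> G n) \<and> b = (\<Sum>n | c n \<noteq> 0. c n)"
    using grading unfolding Z_grading_def by blast
  from theI'[OF this] show ?thesis
    unfolding component_def by simp
qed

lemma component_in_grade: "component G n b \<in> G n"
  using component_decomposition by blast

lemma finite_component_support: "finite {n. component G n b \<noteq> 0}"
  using component_decomposition by blast

lemma sum_components:
  assumes "finite S" and "{n. component G n b \<noteq> 0} \<subseteq> S"
  shows "(\<Sum>n\<in>S. component G n b) = b"
proof -
  have "(\<Sum>n\<in>S. component G n b) = (\<Sum>n | component G n b \<noteq> 0. component G n b)"
    using assms by (intro sum.mono_neutral_right) auto
  also have "\<dots> = b"
    using component_decomposition by metis
  finally show ?thesis .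
qed

lemma component_unique:
  assumes "finite S" and "\<And>n. c n \<in> G n" and "\<And>n. n \<notin> S \<Longrightarrow> c n = 0"
    and "b = (\<Sum>n\<in>S. c n)"
  shows "component G n b = c n"
proof -
  have support: "{n. c n \<noteq> 0} \<subseteq> S"
    using assms(3) by blast
  have sum_support: "b = (\<Sum>n | c n \<noteq> 0. c n)"
    unfolding assms(4) using assms(1) support by (intro sum.mono_neutral_right) auto
  have "\<exists>!c. finite {n. c n \<noteq> 0} \<and> (\<forall>n. c n \<in> G n) \<and> b = (\<Sum>n | c n \<noteq> 0. c n)"
    using grading unfolding Z_grading_def by blast
  from the1_equality[OF this] have "(THE c. finite {n. c n \<noteq> 0} \<and> (\<forall>n. c n \<in> G n) \<and>
      b = (\<Sum>n | c n \<noteq> 0. c n)) = c"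
    using finite_subset[OF support assms(1)] assms(2) sum_support by blast
  then show ?thesis
    unfolding component_def by simp
qed

lemma component_homogeneous: "x \<in> G m \<Longrightarrow> component G n x = (if n = m then x else 0)"
  by (rule component_unique[of "{m}"]) (auto intro: grade_zero)

lemma additive_component: "additive (component G n)"
proof
  fix x y
  let ?S = "{n. component G n x \<noteq> 0} \<union> {n. component G n y \<noteq> 0}"
  show "component G n (x + y) = component G n x + component G n y"
  proof (rule component_unique[of ?S])
    show "x + y = (\<Sum>n\<in>?S. component G n x + component G n y)"
      unfolding sum.distrib using finite_component_support
      by (simp add: sum_components)
  qed (auto simp: finite_component_support component_in_grade grade_add)
qed

lemma component_sum: "component G n (sum F I) = (\<Sum>i\<in>I. component G n (F i))"
  by (rule additive.sum[OF additive_component])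

lemma component_shift:
  assumes h: "additive h" and shift: "\<And>n x. x \<in> G n \<Longrightarrow> h x \<in> G (n + m)"
  shows "component G j (h x) = h (component G (j - m) x)"
proof -
  let ?S = "{n. component G n x \<noteq> 0}"
  show ?thesis
  proof (rule component_unique[of "(\<lambda>n. n + m) ` ?S"])
    show "h (component G (n - m) x) \<in> G n" for n
      using shift[OF component_in_grade, of "n - m"] by simp
    show "h (component G (n - m) x) = 0" if "n \<notin> (\<lambda>n. n + m) ` ?S" for n
      using that additive.zero[OF h] by (auto simp: image_iff) (metis diff_add_cancel)
    have "(\<Sum>n\<in>(\<lambda>n. n + m) ` ?S. h (component G (n - m) x)) = h (\<Sum>n\<in>?S. component G n x)"
      by (simp add: sum.reindex additive.sum[OF h])
    also have "\<dots> = h x"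
      using finite_component_support by (simp add: sum_components)
    finally show "h x = (\<Sum>n\<in>(\<lambda>n. n + m) ` ?S. h (component G (n - m) x))" ..
  qed (simp add: finite_component_support)
qed

lemma component_mult_left:
  assumes "c \<in> G m"
  shows "component G j (c * x) = c * component G (j - m) x"
proof (rule component_shift[where h = "(*) c"])
  show "additive ((*) c)"
    by unfold_locales (rule distrib_left)
  show "c * y \<in> G (n + m)" if "y \<in> G n" for n y
    using grade_mult[OF assms that] by (simp add: add.commute)
qed

lemma component_mult_right:
  assumes "c \<in> G m"
  shows "component G j (x * c) = component G (j - m) x * c"
proof (rule component_shift[where h = "\<lambda>y. y * c"])
  show "additive (\<lambda>y. y * c)"
    by unfold_locales (rule distrib_right)
  show "y * c \<in> G (n + m)" if "y \<in> G n" for n y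
    using grade_mult[OF that assms] .
qed

lemma component_of_int_mult: "component G n (of_int k * x) = of_int k * component G n x"
proof -
  have "additive (\<lambda>y. of_int k * y)"
    by unfold_locales (rule distrib_left)
  from component_shift[OF this, of 0] show ?thesis
    by (simp add: grade_of_int_mult)
qed

lemma component_zero_mult:
  assumes "finite S" and "{n. component G n x \<noteq> 0} \<subseteq> S"
  shows "component G 0 (x * y) = (\<Sum>j\<in>S. component G j x * component G (-j) y)"
proof -
  have "component G 0 (x * y) = component G 0 (\<Sum>j\<in>S. component G j x * y)"
    by (simp add: sum_components[OF assms] flip: sum_distrib_right)
  also have "\<dots> = (\<Sum>j\<in>S. component G 0 (component G j x * y))"
    by (rule component_sum)
  also have "\<dots> = (\<Sum>j\<in>S. component G j x * component G (-j) y)"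
    using component_mult_left[OF component_in_grade] by simp
  finally show ?thesis .
qed

end

definition lin_ext :: "('b \<times> 'b \<Rightarrow> 'c::ring_1) \<Rightarrow> 'b formal_tensor \<Rightarrow> 'c" where
  "lin_ext g u = (\<Sum>p\<in>Poly_Mapping.keys u. of_int (Poly_Mapping.lookup u p) * g p)"

lemma lin_ext_superset:
  assumes "finite S" and "Poly_Mapping.keys u \<subseteq> S"
  shows "lin_ext g u = (\<Sum>p\<in>S. of_int (Poly_Mapping.lookup u p) * g p)"
  unfolding lin_ext_def using assms by (intro sum.mono_neutral_left) (auto simp: in_keys_iff)

lemma additive_lin_ext: "additive (lin_ext g)"
proof
  fix u v :: "'a formal_tensor"
  let ?S = "Poly_Mapping.keys u \<union> Poly_Mapping.keys v"
  have "lin_ext g (u + v) = (\<Sum>p\<in>?S. of_int (Poly_Mapping.lookup (u + v) p) * g p)"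
    using keys_add[of u v] by (intro lin_ext_superset) auto
  also have "\<dots> = (\<Sum>p\<in>?S. of_int (Poly_Mapping.lookup u p) * g p) +
      (\<Sum>p\<in>?S. of_int (Poly_Mapping.lookup v p) * g p)"
    by (simp add: lookup_add distrib_right sum.distrib)
  also have "\<dots> = lin_ext g u + lin_ext g v"
    by (subst (1 2) lin_ext_superset[of ?S]) auto
  finally show "lin_ext g (u + v) = lin_ext g u + lin_ext g v" .
qed

lemma lin_ext_single: "lin_ext g (Poly_Mapping.single p k) = of_int k * g p"
  unfolding lin_ext_def by simp

lemma lin_ext_lact: "lin_ext g (lact c u) = lin_ext (\<lambda>p. g (c * fst p, snd p)) u"
  by (simp add: lact_def additive.sum[OF additive_lin_ext] lin_ext_single lin_ext_def[of _ u])

lemma lin_ext_ract: "lin_ext g (ract u c) = lin_ext (\<lambda>p. g (fst p, snd p * c)) u"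
  by (simp add: ract_def additive.sum[OF additive_lin_ext] lin_ext_single lin_ext_def[of _ u])

lemma lin_ext_tensor_eq:
  assumes "tensor_eq f u v"
    and "\<And>x x' y. g (x + x', y) = g (x, y) + g (x', y)"
    and "\<And>x y y'. g (x, y + y') = g (x, y) + g (x, y')"
    and "\<And>x y a. g (x * f a, y) = g (x, f a * y)"
  shows "lin_ext g u = lin_ext g v"
proof -
  have "lin_ext g w = 0" if "w \<in> tensor_rel f" for w
    using that by induction
      (simp_all add: lin_ext_single additive.zero[OF additive_lin_ext]
        additive.diff[OF additive_lin_ext] assms(2-4))
  then show ?thesis
    using assms(1) additive.diff[OF additive_lin_ext, of g u v] unfolding tensor_eq_def by simp
qed

definition bicomponent :: "(int \<Rightarrow> 'b::ring_1 set) \<Rightarrow> int \<Rightarrow> int \<Rightarrow> 'b \<times> 'b \<Rightarrow> 'b" where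
  "bicomponent G j k p = component G j (fst p) * component G k (snd p)"

context
  fixes G :: "int \<Rightarrow> 'b::ring_1 set"
  assumes grading: "Z_grading G"
begin

lemma lin_ext_bicomponent_in_grade: "lin_ext (bicomponent G j k) u \<in> G (j + k)"
proof -
  have "bicomponent G j k p \<in> G (j + k)" for p
    unfolding bicomponent_def by (intro grade_mult[OF grading] component_in_grade[OF grading])
  then show ?thesis
    unfolding lin_ext_def by (intro grade_sum[OF grading] grade_of_int_mult[OF grading])
qed

lemma lin_ext_bicomponent_tensor_eq:
  assumes "\<forall>a. f a \<in> G 0" and "tensor_eq f u v"
  shows "lin_ext (bicomponent G j k) u = lin_ext (bicomponent G j k) v"
proof (rule lin_ext_tensor_eq[OF assms(2)])
  note component_add = additive.add[OF additive_component[OF grading]]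
  show "bicomponent G j k (x + x', y) = bicomponent G j k (x, y) + bicomponent G j k (x', y)"
    for x x' y
    by (simp add: bicomponent_def component_add distrib_right)
  show "bicomponent G j k (x, y + y') = bicomponent G j k (x, y) + bicomponent G j k (x, y')"
    for x y y'
    by (simp add: bicomponent_def component_add distrib_left)
  show "bicomponent G j k (x * f a, y) = bicomponent G j k (x, f a * y)" for x y a
    using component_mult_right[OF grading, of "f a" 0] component_mult_left[OF grading, of "f a" 0]
      assms(1)
    by (simp add: bicomponent_def mult.assoc)
qed

lemma lin_ext_bicomponent_lact:
  assumes "b \<in> G n"
  shows "lin_ext (bicomponent G (j + n) k) (lact b u) = b * lin_ext (bicomponent G j k) u"
  unfolding lin_ext_lact lin_ext_def[of _ u] bicomponent_def sum_distrib_left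
  by (intro sum.cong refl)
    (simp add: component_mult_left[OF grading assms] mult_of_int_commute mult.assoc)

lemma lin_ext_bicomponent_ract:
  assumes "b \<in> G n"
  shows "lin_ext (bicomponent G j (k + n)) (ract u b) = lin_ext (bicomponent G j k) u * b"
  unfolding lin_ext_ract lin_ext_def[of _ u] bicomponent_def sum_distrib_right
  by (intro sum.cong refl) (simp add: component_mult_right[OF grading assms] mult.assoc)

lemma sum_diagonal_bicomponents:
  assumes "finite J" and "\<And>p. p \<in> Poly_Mapping.keys u \<Longrightarrow> {j. component G j (fst p) \<noteq> 0} \<subseteq> J"
  shows "(\<Sum>j\<in>J. lin_ext (bicomponent G j (-j)) u) = component G 0 (tmult u)"
proof -
  have "(\<Sum>j\<in>J. lin_ext (bicomponent G j (-j)) u) =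
      (\<Sum>p\<in>Poly_Mapping.keys u. of_int (Poly_Mapping.lookup u p) *
        (\<Sum>j\<in>J. component G j (fst p) * component G (-j) (snd p)))"
    unfolding lin_ext_def bicomponent_def sum_distrib_left by (rule sum.swap)
  also have "\<dots> = (\<Sum>p\<in>Poly_Mapping.keys u.
      of_int (Poly_Mapping.lookup u p) * component G 0 (fst p * snd p))"
    using component_zero_mult[OF grading assms(1) assms(2)] by simp
  also have "\<dots> = component G 0 (tmult u)"
    unfolding tmult_def component_sum[OF grading] component_of_int_mult[OF grading] ..
  finally show ?thesis .
qed

lemma separability_idempotent_diagonal:
  fixes f :: "'a::ring_1 \<Rightarrow> 'b"
  assumes one: "1 \<in> G 0" and A_degree_zero: "\<forall>a. f a \<in> G 0" and "separable_map f"
  obtains u :: "int \<Rightarrow> 'b" where "finite {j. u j \<noteq> 0}" and "\<And>j. u j \<in> G 0"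
    and "(\<Sum>j | u j \<noteq> 0. u j) = 1" and "\<And>b n j. b \<in> G n \<Longrightarrow> b * u j = u (j + n) * b"
proof -
  obtain \<sigma> :: "'b \<Rightarrow> 'b formal_tensor" where
    \<sigma>_left: "\<And>b c. tensor_eq f (\<sigma> (c * b)) (lact c (\<sigma> b))" and
    \<sigma>_right: "\<And>b c. tensor_eq f (\<sigma> (b * c)) (ract (\<sigma> b) c)" and
    \<sigma>_section: "\<And>b. tmult (\<sigma> b) = b"
    using assms(3) unfolding separable_map_def by blast
  define e where "e = \<sigma> 1"
  define u where "u j = lin_ext (bicomponent G j (-j)) e" for j
  define J where "J = (\<Union>p\<in>Poly_Mapping.keys e. {j. component G j (fst p) \<noteq> 0})"
  have "finite J"
    unfolding J_def using finite_component_support[OF grading] by auto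
  have "u j = 0" if "j \<notin> J" for j
    using that unfolding u_def lin_ext_def bicomponent_def J_def by (auto intro!: sum.neutral)
  then have support: "{j. u j \<noteq> 0} \<subseteq> J"
    by blast
  have "(\<Sum>j | u j \<noteq> 0. u j) = (\<Sum>j\<in>J. u j)"
    using \<open>finite J\<close> support by (intro sum.mono_neutral_left) auto
  also have "\<dots> = component G 0 (tmult e)"
    unfolding u_def using \<open>finite J\<close> by (rule sum_diagonal_bicomponents) (auto simp: J_def)
  also have "\<dots> = 1"
    using \<sigma>_section component_homogeneous[OF grading one] by (simp add: e_def)
  finally have "(\<Sum>j | u j \<noteq> 0. u j) = 1" .
  moreover have "u j \<in> G 0" for j
    using lin_ext_bicomponent_in_grade[of j "-j" e] by (simp add: u_def)
  moreover have "b * u j = u (j + n) * b" if "b \<in> G n" for b n j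
  proof -
    have "b * u j = lin_ext (bicomponent G (j + n) (-j)) (lact b e)"
      unfolding u_def using lin_ext_bicomponent_lact[OF that] by simp
    also have "\<dots> = lin_ext (bicomponent G (j + n) (-j)) (\<sigma> b)"
      using lin_ext_bicomponent_tensor_eq[OF A_degree_zero \<sigma>_left[where b = 1 and c = b]]
      by (simp add: e_def)
    also have "\<dots> = lin_ext (bicomponent G (j + n) (-j)) (ract e b)"
      using lin_ext_bicomponent_tensor_eq[OF A_degree_zero \<sigma>_right[where b = 1 and c = b]]
      by (simp add: e_def)
    also have "\<dots> = u (j + n) * b"
      unfolding u_def using lin_ext_bicomponent_ract[OF that, of "j + n" "-(j + n)" e] by simp
    finally show ?thesis .
  qed
  ultimately show ?thesis
    using that finite_subset[OF support \<open>finite J\<close>] by blast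
qed

end

lemma finite_ex_shift_notin:
  fixes K :: "int set"
  assumes "finite K" and "K \<noteq> {}" and "n \<noteq> 0"
  shows "\<exists>j\<in>K. j + n \<notin> K"
proof (cases "n > 0")
  case True
  then show ?thesis
    using Max_in[OF assms(1,2)] Max_ge[OF assms(1), of "Max K + n"] by auto
next
  case False
  then show ?thesis
    using assms(3) Min_in[OF assms(1,2)] Min_le[OF assms(1), of "Min K + n"] by auto
qed

theorem theorem4p2:
  fixes f :: "'a::ring_1 \<Rightarrow> 'b::ring_1" and G :: "int \<Rightarrow> 'b set"
  assumes "ring_map f"
    and "Z_grading G"
    and "\<forall>a. f a \<in> G 0"
    and "separable_map f"
    and "\<forall>x\<in>G 0. x \<noteq> 0 \<longrightarrow> (\<forall>y. (x * y = 0 \<longrightarrow> y = 0) \<and> (y * x = 0 \<longrightarrow> y = 0))"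
  shows "\<forall>n. n \<noteq> 0 \<longrightarrow> G n = {0}"
proof -
  have "1 \<in> G 0"
    using assms(1,3) unfolding ring_map_def by metis
  then obtain u where finite_support: "finite {j. u j \<noteq> 0}" and u_degree: "\<And>j. u j \<in> G 0"
    and sum_one: "(\<Sum>j | u j \<noteq> 0. u j) = 1"
    and commute: "\<And>b n j. b \<in> G n \<Longrightarrow> b * u j = u (j + n) * b"
    using separability_idempotent_diagonal[OF assms(2) _ assms(3,4)] by blast
  show ?thesis
  proof (intro allI impI equalityI subsetI)
    fix n b
    assume "n \<noteq> 0" and b: "b \<in> G n"
    have "{j. u j \<noteq> 0} \<noteq> {}"
      using sum_one by force
    then obtain j where "u j \<noteq> 0" and "u (j + n) = 0"
      using finite_ex_shift_notin[OF finite_support _ \<open>n \<noteq> 0\<close>] by blast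
    then have "b * u j = 0"
      using commute[OF b] by simp
    then show "b \<in> {0}"
      using assms(5) u_degree \<open>u j \<noteq> 0\<close> by blast
  next
    fix n :: int and b :: 'b
    assume "b \<in> {0}"
    then show "b \<in> G n"
      using grade_zero[OF assms(2)] by simp
  qed
qed

end
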